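(* Let $K$ be a field which is finite-dimensional over its center $Z(K)$. Let $L/K$ be a field extension such that $K$ is existentially closed in $L$ and $Z(K)\subset Z(L)$. Then $L/K$ is a regular extension.
   Context: "Field" means a not necessarily commutative division ring; $Z(A)$ denotes the center of a ring $A$. $K$ is existentially closed in $L$ if every existential first-order sentence in the language of rings with constants from $K$ which holds in $L$ also holds in $K$. For a field extension $L/K$ and $x\in L$, $K(x)$ is the subfield of $L$ generated by $K$ and $x$; $x$ is algebraic over $K$ if $K(x)$ is finite-dimensional both as a left and as a right $K$-vector space. $L/K$ is regular if every element of $L$ algebraic over $K$ lies in $K$. *)

theory Defs
  imports Main
begin

text \<open>The big field L is modelled as the whole type 'a (a division ring);
  the subfield K is a subset of it closed under the division ring operations.\<close>

definition subdivring :: "'a::division_ring set \<Rightarrow> bool" where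
  "subdivring F \<longleftrightarrow> 0 \<in> F \<and> 1 \<in> F \<and>
     (\<forall>x\<in>F. \<forall>y\<in>F. x + y \<in> F \<and> x * y \<in> F) \<and>
     (\<forall>x\<in>F. - x \<in> F \<and> inverse x \<in> F)"

definition center_of :: "'a::ring set \<Rightarrow> 'a set" where
  "center_of A = {z \<in> A. \<forall>y\<in>A. z * y = y * z}"

definition left_findim :: "'a::ring set \<Rightarrow> 'a set \<Rightarrow> bool" where
  "left_findim K F \<longleftrightarrow> (\<exists>B. finite B \<and> B \<subseteq> F \<and>
     (\<forall>y\<in>F. \<exists>c. (\<forall>b\<in>B. c b \<in> K) \<and> y = (\<Sum>b\<in>B. c b * b)))"

definition right_findim :: "'a::ring set \<Rightarrow> 'a set \<Rightarrow> bool" where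
  "right_findim K F \<longleftrightarrow> (\<exists>B. finite B \<and> B \<subseteq> F \<and>
     (\<forall>y\<in>F. \<exists>c. (\<forall>b\<in>B. c b \<in> K) \<and> y = (\<Sum>b\<in>B. b * c b)))"

definition gen_subfield :: "'a::division_ring set \<Rightarrow> 'a \<Rightarrow> 'a set" where
  "gen_subfield K x = \<Inter>{F. subdivring F \<and> K \<subseteq> F \<and> x \<in> F}"

definition algebraic_over :: "'a::division_ring set \<Rightarrow> 'a \<Rightarrow> bool" where
  "algebraic_over K x \<longleftrightarrow> left_findim K (gen_subfield K x) \<and> right_findim K (gen_subfield K x)"

definition regular_ext :: "'a::division_ring set \<Rightarrow> bool" where
  "regular_ext K \<longleftrightarrow> (\<forall>x. algebraic_over K x \<longrightarrow> x \<in> K)"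

datatype 'a tm = Var nat | Cst 'a | Zero | One | Add "'a tm" "'a tm" | Neg "'a tm" | Mul "'a tm" "'a tm"

datatype 'a qf = Eq "'a tm" "'a tm" | Not "'a qf" | Conj "'a qf" "'a qf" | Disj "'a qf" "'a qf"

primrec eval_tm :: "(nat \<Rightarrow> 'a::ring_1) \<Rightarrow> 'a tm \<Rightarrow> 'a" where
  "eval_tm v (Var n) = v n"
| "eval_tm v (Cst c) = c"
| "eval_tm v Zero = 0"
| "eval_tm v One = 1"
| "eval_tm v (Add s t) = eval_tm v s + eval_tm v t"
| "eval_tm v (Neg s) = - eval_tm v s"
| "eval_tm v (Mul s t) = eval_tm v s * eval_tm v t"

primrec holds :: "(nat \<Rightarrow> 'a::ring_1) \<Rightarrow> 'a qf \<Rightarrow> bool" where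
  "holds v (Eq s t) = (eval_tm v s = eval_tm v t)"
| "holds v (Not f) = (\<not> holds v f)"
| "holds v (Conj f g) = (holds v f \<and> holds v g)"
| "holds v (Disj f g) = (holds v f \<or> holds v g)"

primrec consts_tm :: "'a tm \<Rightarrow> 'a set" where
  "consts_tm (Var n) = {}"
| "consts_tm (Cst c) = {c}"
| "consts_tm Zero = {}"
| "consts_tm One = {}"
| "consts_tm (Add s t) = consts_tm s \<union> consts_tm t"
| "consts_tm (Neg s) = consts_tm s"
| "consts_tm (Mul s t) = consts_tm s \<union> consts_tm t"

primrec consts_qf :: "'a qf \<Rightarrow> 'a set" where
  "consts_qf (Eq s t) = consts_tm s \<union> consts_tm t"
| "consts_qf (Not f) = consts_qf f"
| "consts_qf (Conj f g) = consts_qf f \<union> consts_qf g"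
| "consts_qf (Disj f g) = consts_qf f \<union> consts_qf g"

text \<open>K is existentially closed in L (= the whole type): every existential sentence
  (existential closure of a quantifier-free formula) with constants from K that holds
  in L also holds in K.\<close>
definition ex_closed :: "'a::division_ring set \<Rightarrow> bool" where
  "ex_closed K \<longleftrightarrow> (\<forall>\<phi>. consts_qf \<phi> \<subseteq> K \<longrightarrow> (\<exists>v. holds v \<phi>) \<longrightarrow>
                        (\<exists>v. range v \<subseteq> K \<and> holds v \<phi>))"

end

theory Submission
  imports Defs
begin

text \<open>Let \<open>Z\<close> be the centre of \<open>K\<close>, central in \<open>L\<close> by hypothesis, and let \<open>x\<close> be
  algebraic over \<open>K\<close>. Then \<open>E = K(x)\<close> is finite-dimensional over \<open>Z\<close>; choose a \<open>Z\<close>-basis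
  \<open>b\<^sub>1, \<dots>, b\<^sub>n\<close> of \<open>E\<close>, whose structure constants lie in \<open>Z\<close>, and expand a finite
  \<open>Z\<close>-spanning family of \<open>K\<close> in it. The statement that some \<open>y\<^sub>1, \<dots>, y\<^sub>n\<close> have the
  same multiplication table, and the spanning family of \<open>K\<close> the same coordinates in them,
  is an existential sentence over \<open>K\<close> that holds in \<open>L\<close> (take \<open>y = b\<close>), hence has a
  solution in \<open>K\<close>. As \<open>Z\<close> is central, the \<open>Z\<close>-linear map \<open>b\<^sub>k \<mapsto> y\<^sub>k\<close> is a ring
  homomorphism \<open>E \<rightarrow> K\<close> fixing \<open>K\<close>. Being injective on the division ring \<open>E\<close>, it
  forces \<open>E = K\<close>, so \<open>x \<in> K\<close>.\<close>

lemma subdivring_zero: "subdivring S \<Longrightarrow> 0 \<in> S"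
  and subdivring_one: "subdivring S \<Longrightarrow> 1 \<in> S"
  and subdivring_add: "subdivring S \<Longrightarrow> x \<in> S \<Longrightarrow> y \<in> S \<Longrightarrow> x + y \<in> S"
  and subdivring_mult: "subdivring S \<Longrightarrow> x \<in> S \<Longrightarrow> y \<in> S \<Longrightarrow> x * y \<in> S"
  and subdivring_uminus: "subdivring S \<Longrightarrow> x \<in> S \<Longrightarrow> - x \<in> S"
  and subdivring_inverse: "subdivring S \<Longrightarrow> x \<in> S \<Longrightarrow> inverse x \<in> S"
  by (simp_all add: subdivring_def)

lemma subdivring_diff: "subdivring S \<Longrightarrow> x \<in> S \<Longrightarrow> y \<in> S \<Longrightarrow> x - y \<in> S"
  by (metis diff_conv_add_uminus subdivring_add subdivring_uminus)

lemma subdivring_sum: "subdivring S \<Longrightarrow> (\<And>i. i \<in> A \<Longrightarrow> f i \<in> S) \<Longrightarrow> sum f A \<in> S"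
  by (induct A rule: infinite_finite_induct) (auto intro: subdivring_zero subdivring_add)

lemma subdivring_center_of:
  assumes K: "subdivring (K::'a::division_ring set)"
  shows "subdivring (center_of K)"
proof -
  have mult: "x * y * w = w * (x * y)" if "x * w = w * x" "y * w = w * y" for x y w :: 'a
    by (metis that mult.assoc)
  have add: "(x + y) * w = w * (x + y)" if "x * w = w * x" "y * w = w * y" for x y w :: 'a
    using that by (simp add: distrib_left distrib_right)
  have memI: "z \<in> center_of K" if "z \<in> K" "\<And>w. w \<in> K \<Longrightarrow> z * w = w * z" for z
    using that by (simp add: center_of_def)
  have memD: "z \<in> K" "w \<in> K \<Longrightarrow> z * w = w * z" if "z \<in> center_of K" for z w
    using that by (simp_all add: center_of_def)
  show ?thesis
    unfolding subdivring_def
    by (intro conjI ballI memI)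
      (auto simp: K subdivring_zero subdivring_one subdivring_add subdivring_mult
        subdivring_uminus subdivring_inverse memD(1) intro: mult add mult_commute_imp_mult_inverse_commute memD(2))
qed

lemma subdivring_gen_subfield: "subdivring (gen_subfield K x)"
  unfolding gen_subfield_def subdivring_def by auto

lemma gen_subfield_superset: "K \<subseteq> gen_subfield K x"
  and gen_subfield_generator: "x \<in> gen_subfield K x"
  unfolding gen_subfield_def by auto

text \<open>\<open>x - h x\<close> lies in the kernel of \<open>h\<close>, which is trivial because \<open>E\<close> is a division ring.\<close>

lemma retraction_hom_imp_subset:
  fixes h :: "'a::division_ring \<Rightarrow> 'a"
  assumes "subdivring E" "subdivring K" "K \<subseteq> E" "h ` E \<subseteq> K" "\<forall>t\<in>K. h t = t"
    and diff: "\<forall>a\<in>E. \<forall>a'\<in>E. h (a - a') = h a - h a'"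
    and mult: "\<forall>a\<in>E. \<forall>a'\<in>E. h (a * a') = h a * h a'"
  shows "E \<subseteq> K"
proof
  fix x assume x: "x \<in> E"
  define u where "u = h x"
  have u: "u \<in> K" "u \<in> E"
    using x assms(3,4) by (auto simp: u_def)
  have "h (x - u) = 0"
    using diff x u assms(5) by (simp add: u_def)
  show "x \<in> K"
  proof (rule ccontr)
    assume "x \<notin> K"
    then have "x - u \<noteq> 0"
      using u by auto
    then have "(x - u) * inverse (x - u) = 1"
      by (rule right_inverse)
    moreover have "inverse (x - u) \<in> E" "x - u \<in> E"
      using x u assms(1) by (auto intro: subdivring_diff subdivring_inverse)
    ultimately have "h 1 = 0"
      using mult \<open>h (x - u) = 0\<close> by (metis mult_zero_left)
    moreover have "h 1 = 1"
      using assms(2,5) subdivring_one by blast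
    ultimately show False by simp
  qed
qed

section \<open>Left linear algebra over a subdivision ring\<close>

definition spans :: "'a::ring set \<Rightarrow> 'i set \<Rightarrow> ('i \<Rightarrow> 'a) \<Rightarrow> 'a set \<Rightarrow> bool" where
  "spans Z I b S \<longleftrightarrow> (\<forall>y\<in>S. \<exists>c. (\<forall>i\<in>I. c i \<in> Z) \<and> y = (\<Sum>i\<in>I. c i * b i))"

definition independent_over :: "'a::ring set \<Rightarrow> nat \<Rightarrow> (nat \<Rightarrow> 'a) \<Rightarrow> bool" where
  "independent_over Z n b \<longleftrightarrow>
     (\<forall>c. (\<forall>k<n. c k \<in> Z) \<longrightarrow> (\<Sum>k<n. c k * b k) = 0 \<longrightarrow> (\<forall>k<n. c k = 0))"

definition basis_of :: "'a::ring set \<Rightarrow> nat \<Rightarrow> (nat \<Rightarrow> 'a) \<Rightarrow> 'a set \<Rightarrow> bool" where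
  "basis_of Z n b S \<longleftrightarrow> spans Z {..<n} b S \<and> (\<forall>k<n. b k \<in> S) \<and> independent_over Z n b"

lemma left_findim_iff_spans:
  "left_findim K F \<longleftrightarrow> (\<exists>B. finite B \<and> B \<subseteq> F \<and> spans K B (\<lambda>b. b) F)"
  by (simp add: left_findim_def spans_def)

lemma spansD:
  assumes "spans Z {..<n} b S" "a \<in> S"
  obtains c where "\<forall>k<n. c k \<in> Z" "a = (\<Sum>k<n. c k * b k)"
  using assms unfolding spans_def by (meson lessThan_iff)

lemma spans_reindex_nat:
  assumes "finite I" "spans Z I b S" "b ` I \<subseteq> S"
  obtains b' where "spans Z {..<card I} b' S" "\<forall>k<card I. b' k \<in> S"
proof -
  obtain h where h: "bij_betw h {..<card I} I"
    using ex_bij_betw_nat_finite[OF assms(1)] by (auto simp: atLeast0LessThan)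
  have "spans Z {..<card I} (b \<circ> h) S"
    unfolding spans_def
  proof
    fix y assume "y \<in> S"
    then obtain c where c: "\<forall>i\<in>I. c i \<in> Z" "y = (\<Sum>i\<in>I. c i * b i)"
      using assms(2) by (auto simp: spans_def)
    then have "y = (\<Sum>k<card I. (c \<circ> h) k * (b \<circ> h) k)"
      using sum.reindex_bij_betw[OF h, of "\<lambda>i. c i * b i"] by simp
    moreover have "\<forall>k<card I. (c \<circ> h) k \<in> Z"
      using c(1) h by (auto simp: bij_betw_def)
    ultimately show "\<exists>c. (\<forall>k\<in>{..<card I}. c k \<in> Z) \<and> y = (\<Sum>k<card I. c k * (b \<circ> h) k)"
      by auto
  qed
  moreover have "\<forall>k<card I. (b \<circ> h) k \<in> S"
    using h assms(3) by (auto simp: bij_betw_def)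
  ultimately show ?thesis by (rule that)
qed

lemma spans_remove:
  fixes b :: "'i \<Rightarrow> 'a::division_ring"
  assumes Z: "subdivring Z" and I: "finite I" "j \<in> I" and sp: "spans Z I b S"
    and c: "\<forall>i\<in>I. c i \<in> Z" "c j \<noteq> 0" "(\<Sum>i\<in>I. c i * b i) = 0"
  shows "spans Z (I - {j}) b S"
  unfolding spans_def
proof
  fix y assume "y \<in> S"
  then obtain d where d: "\<forall>i\<in>I. d i \<in> Z" "y = (\<Sum>i\<in>I. d i * b i)"
    using sp by (auto simp: spans_def)
  have "c j * b j = - (\<Sum>i\<in>I-{j}. c i * b i)"
    using c(3) sum.remove[OF I, of "\<lambda>i. c i * b i"] by (simp add: eq_neg_iff_add_eq_0)
  then have "inverse (c j) * (c j * b j) = inverse (c j) * - (\<Sum>i\<in>I-{j}. c i * b i)"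
    by simp
  then have bj: "b j = (\<Sum>i\<in>I-{j}. - (inverse (c j) * c i) * b i)"
    using c(2) by (simp add: mult.assoc[symmetric] sum_distrib_left sum_negf)
  have "y = d j * b j + (\<Sum>i\<in>I-{j}. d i * b i)"
    using d(2) sum.remove[OF I, of "\<lambda>i. d i * b i"] by simp
  also have "\<dots> = (\<Sum>i\<in>I-{j}. (d i - d j * inverse (c j) * c i) * b i)"
    by (simp add: bj sum_distrib_left sum.distrib[symmetric] algebra_simps)
  finally show "\<exists>e. (\<forall>i\<in>I-{j}. e i \<in> Z) \<and> y = (\<Sum>i\<in>I-{j}. e i * b i)"
    using d(1) c(1,2) I(2) Z
    by (intro exI[of _ "\<lambda>i. d i - d j * inverse (c j) * c i"])
      (auto intro!: subdivring_diff subdivring_mult subdivring_inverse)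
qed

lemma spans_products:
  assumes "spans Z D (\<lambda>d. d) K" "spans K C (\<lambda>c. c) E"
  shows "spans Z (D \<times> C) (\<lambda>(d, c). d * c) E"
  unfolding spans_def
proof
  fix y assume "y \<in> E"
  then obtain k where k: "\<forall>c\<in>C. k c \<in> K" "y = (\<Sum>c\<in>C. k c * c)"
    using assms(2) by (auto simp: spans_def)
  have "\<forall>c\<in>C. \<exists>v. (\<forall>d\<in>D. v d \<in> Z) \<and> k c = (\<Sum>d\<in>D. v d * d)"
    using k(1) assms(1) unfolding spans_def by blast
  then obtain w where w: "\<forall>c\<in>C. (\<forall>d\<in>D. w c d \<in> Z) \<and> k c = (\<Sum>d\<in>D. w c d * d)"
    by metis
  have "y = (\<Sum>c\<in>C. \<Sum>d\<in>D. w c d * (d * c))"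
    using k(2) w by (simp add: sum_distrib_right mult.assoc)
  also have "\<dots> = (\<Sum>d\<in>D. \<Sum>c\<in>C. w c d * (d * c))"
    by (rule sum.swap)
  also have "\<dots> = (\<Sum>(d, c)\<in>D \<times> C. w c d * (d * c))"
    by (rule sum.cartesian_product)
  also have "\<dots> = (\<Sum>q\<in>D \<times> C. (\<lambda>(d, c). w c d) q * (\<lambda>(d, c). d * c) q)"
    by (rule sum.cong) auto
  finally have "y = (\<Sum>q\<in>D \<times> C. (\<lambda>(d, c). w c d) q * (\<lambda>(d, c). d * c) q)" .
  moreover have "\<forall>q\<in>D \<times> C. (\<lambda>(d, c). w c d) q \<in> Z"
    using w by auto
  ultimately show "\<exists>e. (\<forall>q\<in>D \<times> C. e q \<in> Z) \<and> y = (\<Sum>q\<in>D \<times> C. e q * (\<lambda>(d, c). d * c) q)"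
    by blast
qed

text \<open>A spanning family of minimal length is independent, since a nontrivial relation
  would let one member be dropped.\<close>

lemma finite_spans_imp_basis:
  fixes b :: "'i \<Rightarrow> 'a::division_ring"
  assumes Z: "subdivring Z" and "finite I" "spans Z I b S" "b ` I \<subseteq> S"
  obtains n b' where "basis_of Z n b' S"
proof -
  define spanning where "spanning n \<longleftrightarrow> (\<exists>b'. spans Z {..<n} b' S \<and> (\<forall>k<n. b' k \<in> S))" for n :: nat
  have "spanning (card I)"
    using spans_reindex_nat[OF assms(2-4)] unfolding spanning_def by blast
  define n where "n = (LEAST n. spanning n)"
  have "spanning n"
    unfolding n_def by (rule LeastI) fact
  then obtain b' where b': "spans Z {..<n} b' S" "\<forall>k<n. b' k \<in> S"
    unfolding spanning_def by blast
  have "independent_over Z n b'"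
  proof (rule ccontr)
    assume "\<not> independent_over Z n b'"
    then obtain c j where c: "\<forall>k<n. c k \<in> Z" "(\<Sum>k<n. c k * b' k) = 0" "j < n" "c j \<noteq> 0"
      unfolding independent_over_def by blast
    then have "spans Z ({..<n} - {j}) b' S"
      by (intro spans_remove[OF Z _ _ b'(1)]) auto
    then have "spanning (card ({..<n} - {j}))"
      using spans_reindex_nat[of "{..<n} - {j}"] b'(2) unfolding spanning_def by blast
    then have "n \<le> card ({..<n} - {j})"
      unfolding n_def by (rule Least_le)
    with c(3) show False by simp
  qed
  with b' have "basis_of Z n b' S"
    unfolding basis_of_def by blast
  then show ?thesis by (rule that)
qed

lemma independent_overD:
  "independent_over Z n b \<Longrightarrow> \<forall>k<n. c k \<in> Z \<Longrightarrow> (\<Sum>k<n. c k * b k) = 0 \<Longrightarrow> k < n \<Longrightarrow> c k = 0"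
  by (simp add: independent_over_def)

lemma basis_of_coords_unique:
  assumes "basis_of Z n b S" "subdivring Z" "\<forall>k<n. c k \<in> Z" "\<forall>k<n. d k \<in> Z"
    and "(\<Sum>k<n. c k * b k) = (\<Sum>k<n. d k * b k)"
  shows "\<forall>k<n. c k = d k"
proof -
  have indep: "independent_over Z n b"
    using assms(1) by (simp add: basis_of_def)
  have "(\<Sum>k<n. (c k - d k) * b k) = (\<Sum>k<n. c k * b k) - (\<Sum>k<n. d k * b k)"
    by (simp only: left_diff_distrib sum_subtractf)
  then have zero: "(\<Sum>k<n. (c k - d k) * b k) = 0"
    using assms(5) by simp
  have diff: "\<forall>k<n. c k - d k \<in> Z"
    using assms(2-4) subdivring_diff by blast
  have "c k - d k = 0" if "k < n" for k
    by (rule independent_overD[OF indep diff zero that])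
  then show ?thesis by simp
qed

lemma sum_mult_sum_structure_constants:
  fixes f :: "nat \<Rightarrow> 'a::ring"
  assumes table: "\<forall>i<n. \<forall>j<n. f i * f j = (\<Sum>k<n. m i j k * f k)"
    and central: "\<forall>j<n. \<forall>t. d j * t = t * d j"
  shows "(\<Sum>i<n. c i * f i) * (\<Sum>j<n. d j * f j) =
    (\<Sum>k<n. (\<Sum>i<n. \<Sum>j<n. c i * d j * m i j k) * f k)"
proof -
  have "(\<Sum>i<n. c i * f i) * (\<Sum>j<n. d j * f j) = (\<Sum>i<n. \<Sum>j<n. c i * f i * (d j * f j))"
    by (subst sum_distrib_right) (simp add: sum_distrib_left)
  also have "\<dots> = (\<Sum>i<n. \<Sum>j<n. c i * d j * (f i * f j))"
    using central by (intro sum.cong refl) (metis lessThan_iff mult.assoc)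
  also have "\<dots> = (\<Sum>i<n. \<Sum>j<n. \<Sum>k<n. c i * d j * m i j k * f k)"
    using table by (simp add: sum_distrib_left mult.assoc)
  also have "\<dots> = (\<Sum>i<n. \<Sum>k<n. \<Sum>j<n. c i * d j * m i j k * f k)"
    by (intro sum.cong refl sum.swap)
  also have "\<dots> = (\<Sum>k<n. \<Sum>i<n. \<Sum>j<n. c i * d j * m i j k * f k)"
    by (rule sum.swap)
  also have "\<dots> = (\<Sum>k<n. (\<Sum>i<n. \<Sum>j<n. c i * d j * m i j k) * f k)"
    by (simp add: sum_distrib_right)
  finally show ?thesis .
qed

lemma sum_coefficients_swap:
  fixes f :: "nat \<Rightarrow> 'a::ring"
  shows "(\<Sum>k<n. (\<Sum>l<p. w l * r l k) * f k) = (\<Sum>l<p. w l * (\<Sum>k<n. r l k * f k))"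
proof -
  have "(\<Sum>k<n. (\<Sum>l<p. w l * r l k) * f k) = (\<Sum>k<n. \<Sum>l<p. w l * r l k * f k)"
    by (simp add: sum_distrib_right)
  also have "\<dots> = (\<Sum>l<p. \<Sum>k<n. w l * r l k * f k)"
    by (rule sum.swap)
  also have "\<dots> = (\<Sum>l<p. w l * (\<Sum>k<n. r l k * f k))"
    by (simp add: sum_distrib_left mult.assoc)
  finally show ?thesis .
qed

section \<open>Linear extension of a map on a basis\<close>

text \<open>For \<open>a\<close> outside the \<open>Z\<close>-span of \<open>b\<close> the \<open>SOME\<close> below is unconstrained; all lemmas
  about \<open>coords\<close> and \<open>linear_extension\<close> restrict to the span.\<close>

definition coords :: "'a::ring set \<Rightarrow> nat \<Rightarrow> (nat \<Rightarrow> 'a) \<Rightarrow> 'a \<Rightarrow> nat \<Rightarrow> 'a" where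
  "coords Z n b a = (SOME c. (\<forall>k<n. c k \<in> Z) \<and> a = (\<Sum>k<n. c k * b k))"

definition linear_extension :: "'a::ring set \<Rightarrow> nat \<Rightarrow> (nat \<Rightarrow> 'a) \<Rightarrow> (nat \<Rightarrow> 'a) \<Rightarrow> 'a \<Rightarrow> 'a" where
  "linear_extension Z n b y a = (\<Sum>k<n. coords Z n b a k * y k)"

lemma coords_represent:
  assumes "\<forall>k<n. c k \<in> Z" "a = (\<Sum>k<n. c k * b k)"
  shows "\<forall>k<n. coords Z n b a k \<in> Z" "a = (\<Sum>k<n. coords Z n b a k * b k)"
  using someI[of "\<lambda>c. (\<forall>k<n. c k \<in> Z) \<and> a = (\<Sum>k<n. c k * b k)" c] assms
  unfolding coords_def by auto

lemma spans_coords: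
  assumes "spans Z {..<n} b S" "a \<in> S"
  shows "\<forall>k<n. coords Z n b a k \<in> Z" "a = (\<Sum>k<n. coords Z n b a k * b k)"
proof -
  obtain c where "\<forall>k<n. c k \<in> Z" "a = (\<Sum>k<n. c k * b k)"
    using assms by (rule spansD)
  then show "\<forall>k<n. coords Z n b a k \<in> Z" "a = (\<Sum>k<n. coords Z n b a k * b k)"
    by (rule coords_represent)+
qed

lemma linear_extension_sum:
  assumes "basis_of Z n b S" "subdivring Z" "\<forall>k<n. c k \<in> Z"
  shows "linear_extension Z n b y (\<Sum>k<n. c k * b k) = (\<Sum>k<n. c k * y k)"
proof -
  let ?a = "\<Sum>k<n. c k * b k"
  have "\<forall>k<n. coords Z n b ?a k = c k"
    by (rule basis_of_coords_unique[OF assms(1,2) coords_represent(1)[OF assms(3) refl] assms(3)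
          coords_represent(2)[OF assms(3) refl, symmetric]])
  then show ?thesis
    unfolding linear_extension_def by simp
qed

lemma linear_extension_in:
  assumes "spans Z {..<n} b S" "a \<in> S" "subdivring K" "Z \<subseteq> K" "\<forall>k<n. y k \<in> K"
  shows "linear_extension Z n b y a \<in> K"
  unfolding linear_extension_def
  using spans_coords(1)[OF assms(1,2)] assms(3-5)
  by (auto intro!: subdivring_sum subdivring_mult)

lemma linear_extension_diff:
  assumes "basis_of Z n b S" "subdivring Z" "a \<in> S" "a' \<in> S"
  shows "linear_extension Z n b y (a - a') = linear_extension Z n b y a - linear_extension Z n b y a'"
proof -
  have sp: "spans Z {..<n} b S"
    using assms(1) by (simp add: basis_of_def)
  define c where "c = coords Z n b a"
  define d where "d = coords Z n b a'"
  have "\<forall>k<n. c k - d k \<in> Z"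
    using spans_coords(1)[OF sp assms(3)] spans_coords(1)[OF sp assms(4)] assms(2)
    by (auto simp: c_def d_def intro: subdivring_diff)
  moreover have "a - a' = (\<Sum>k<n. (c k - d k) * b k)"
    using spans_coords(2)[OF sp assms(3)] spans_coords(2)[OF sp assms(4)]
    by (simp add: c_def d_def left_diff_distrib sum_subtractf)
  ultimately have "linear_extension Z n b y (a - a') = (\<Sum>k<n. (c k - d k) * y k)"
    using linear_extension_sum[OF assms(1,2)] by simp
  also have "\<dots> = linear_extension Z n b y a - linear_extension Z n b y a'"
    by (simp add: linear_extension_def c_def d_def left_diff_distrib sum_subtractf)
  finally show ?thesis .
qed

lemma linear_extension_mult:
  assumes "basis_of Z n b S" "subdivring Z" "Z \<subseteq> center_of UNIV" "a \<in> S" "a' \<in> S"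
    and "\<forall>i<n. \<forall>j<n. \<forall>k<n. m i j k \<in> Z"
    and "\<forall>i<n. \<forall>j<n. b i * b j = (\<Sum>k<n. m i j k * b k)"
    and "\<forall>i<n. \<forall>j<n. y i * y j = (\<Sum>k<n. m i j k * y k)"
  shows "linear_extension Z n b y (a * a') = linear_extension Z n b y a * linear_extension Z n b y a'"
proof -
  have sp: "spans Z {..<n} b S"
    using assms(1) by (simp add: basis_of_def)
  define c where "c = coords Z n b a"
  define d where "d = coords Z n b a'"
  have c: "\<forall>k<n. c k \<in> Z" "a = (\<Sum>k<n. c k * b k)"
    unfolding c_def by (rule spans_coords[OF sp assms(4)])+
  have d: "\<forall>k<n. d k \<in> Z" "a' = (\<Sum>k<n. d k * b k)"
    unfolding d_def by (rule spans_coords[OF sp assms(5)])+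
  have central: "\<forall>j<n. \<forall>t. d j * t = t * d j"
    using d(1) assms(3) by (auto simp: center_of_def)
  let ?e = "\<lambda>k. \<Sum>i<n. \<Sum>j<n. c i * d j * m i j k"
  have "\<forall>k<n. ?e k \<in> Z"
    using c(1) d(1) assms(2,6) by (auto intro!: subdivring_sum subdivring_mult)
  moreover have "a * a' = (\<Sum>k<n. ?e k * b k)"
    using sum_mult_sum_structure_constants[OF assms(7) central] c(2) d(2) by simp
  ultimately have "linear_extension Z n b y (a * a') = (\<Sum>k<n. ?e k * y k)"
    using linear_extension_sum[OF assms(1,2)] by simp
  also have "\<dots> = (\<Sum>i<n. c i * y i) * (\<Sum>j<n. d j * y j)"
    using sum_mult_sum_structure_constants[OF assms(8) central] by simp
  also have "\<dots> = linear_extension Z n b y a * linear_extension Z n b y a'"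
    by (simp add: linear_extension_def c_def d_def)
  finally show ?thesis .
qed

lemma linear_extension_fixes:
  assumes "basis_of Z n b S" "subdivring Z" "spans Z {..<p} e T" "t \<in> T"
    and "\<forall>l<p. \<forall>k<n. r l k \<in> Z"
    and "\<forall>l<p. e l = (\<Sum>k<n. r l k * b k)" "\<forall>l<p. e l = (\<Sum>k<n. r l k * y k)"
  shows "linear_extension Z n b y t = t"
proof -
  obtain w where w: "\<forall>l<p. w l \<in> Z" "t = (\<Sum>l<p. w l * e l)"
    using assms(3,4) by (rule spansD)
  let ?e = "\<lambda>k. \<Sum>l<p. w l * r l k"
  have "\<forall>k<n. ?e k \<in> Z"
    using w(1) assms(2,5) by (auto intro!: subdivring_sum subdivring_mult)
  moreover have "t = (\<Sum>k<n. ?e k * b k)"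
    unfolding sum_coefficients_swap using w(2) assms(6) by simp
  ultimately have "linear_extension Z n b y t = (\<Sum>k<n. ?e k * y k)"
    using linear_extension_sum[OF assms(1,2)] by simp
  also have "\<dots> = t"
    unfolding sum_coefficients_swap using w(2) assms(7) by simp
  finally show ?thesis .
qed

section \<open>Existentially closed subfields\<close>

primrec tm_sum :: "(nat \<Rightarrow> 'a tm) \<Rightarrow> nat \<Rightarrow> 'a tm" where
  "tm_sum f 0 = Zero"
| "tm_sum f (Suc n) = Add (tm_sum f n) (f n)"

primrec qf_conjs :: "(nat \<Rightarrow> 'a qf) \<Rightarrow> nat \<Rightarrow> 'a qf" where
  "qf_conjs f 0 = Eq Zero Zero"
| "qf_conjs f (Suc n) = Conj (qf_conjs f n) (f n)"

lemma eval_tm_sum: "eval_tm v (tm_sum f n) = (\<Sum>i<n. eval_tm v (f i))"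
  by (induct n) auto

lemma holds_qf_conjs: "holds v (qf_conjs f n) \<longleftrightarrow> (\<forall>i<n. holds v (f i))"
  by (induct n) (auto simp: less_Suc_eq)

lemma consts_tm_sum: "(\<And>i. i < n \<Longrightarrow> consts_tm (f i) \<subseteq> S) \<Longrightarrow> consts_tm (tm_sum f n) \<subseteq> S"
  by (induct n) auto

lemma consts_qf_conjs: "(\<And>i. i < n \<Longrightarrow> consts_qf (f i) \<subseteq> S) \<Longrightarrow> consts_qf (qf_conjs f n) \<subseteq> S"
  by (induct n) auto

lemma ex_closed_solution:
  fixes K :: "'a::division_ring set" and b e :: "nat \<Rightarrow> 'a"
    and m :: "nat \<Rightarrow> nat \<Rightarrow> nat \<Rightarrow> 'a" and r :: "nat \<Rightarrow> nat \<Rightarrow> 'a"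
  assumes "ex_closed K"
    and m: "\<forall>i<n. \<forall>j<n. \<forall>k<n. m i j k \<in> K" and r: "\<forall>l<p. \<forall>k<n. r l k \<in> K"
    and e: "\<forall>l<p. e l \<in> K"
    and "\<forall>i<n. \<forall>j<n. b i * b j = (\<Sum>k<n. m i j k * b k)"
    and "\<forall>l<p. e l = (\<Sum>k<n. r l k * b k)"
  obtains y where "range y \<subseteq> K"
    "\<forall>i<n. \<forall>j<n. y i * y j = (\<Sum>k<n. m i j k * y k)" "\<forall>l<p. e l = (\<Sum>k<n. r l k * y k)"
proof -
  define table where "table i j = Eq (Mul (Var i) (Var j)) (tm_sum (\<lambda>k. Mul (Cst (m i j k)) (Var k)) n)"
    for i j
  define expansion where "expansion l = Eq (Cst (e l)) (tm_sum (\<lambda>k. Mul (Cst (r l k)) (Var k)) n)"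
    for l
  define \<phi> where "\<phi> = Conj (qf_conjs (\<lambda>i. qf_conjs (table i) n) n) (qf_conjs expansion p)"
  have holds_\<phi>: "holds v \<phi> \<longleftrightarrow> (\<forall>i<n. \<forall>j<n. v i * v j = (\<Sum>k<n. m i j k * v k))
      \<and> (\<forall>l<p. e l = (\<Sum>k<n. r l k * v k))" for v
    by (simp add: \<phi>_def table_def expansion_def holds_qf_conjs eval_tm_sum)
  have "consts_qf \<phi> \<subseteq> K"
    unfolding \<phi>_def table_def expansion_def using m r e
    by (auto intro!: consts_qf_conjs elim!: consts_tm_sum[THEN subsetD, rotated])
  moreover have "holds b \<phi>"
    using assms(5,6) by (simp add: holds_\<phi>)
  ultimately obtain y where "range y \<subseteq> K" "holds y \<phi>"
    using assms(1) unfolding ex_closed_def by blast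
  then show ?thesis
    using that by (simp add: holds_\<phi>)
qed

lemma ex_closed_finite_extension_subset:
  fixes p :: nat
  assumes "ex_closed K" "subdivring K" "subdivring Z" "Z \<subseteq> K" "Z \<subseteq> center_of UNIV"
    and "spans Z {..<p} e K" "\<forall>l<p. e l \<in> K"
    and "subdivring E" "K \<subseteq> E" "basis_of Z n b E"
  shows "E \<subseteq> K"
proof -
  have sp: "spans Z {..<n} b E" and b: "\<forall>k<n. b k \<in> E"
    using assms(10) by (simp_all add: basis_of_def)
  define m where "m i j = coords Z n b (b i * b j)" for i j
  define r where "r l = coords Z n b (e l)" for l
  have "b i * b j \<in> E" if "i < n" "j < n" for i j
    using that b assms(8) subdivring_mult by blast
  then have m: "\<forall>i<n. \<forall>j<n. \<forall>k<n. m i j k \<in> Z" "\<forall>i<n. \<forall>j<n. b i * b j = (\<Sum>k<n. m i j k * b k)"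
    unfolding m_def using spans_coords[OF sp] by blast+
  have r: "\<forall>l<p. \<forall>k<n. r l k \<in> Z" "\<forall>l<p. e l = (\<Sum>k<n. r l k * b k)"
    unfolding r_def using spans_coords[OF sp] assms(7,9) by blast+
  have "\<forall>i<n. \<forall>j<n. \<forall>k<n. m i j k \<in> K" "\<forall>l<p. \<forall>k<n. r l k \<in> K"
    using m(1) r(1) assms(4) by blast+
  then obtain y where y: "range y \<subseteq> K" "\<forall>i<n. \<forall>j<n. y i * y j = (\<Sum>k<n. m i j k * y k)"
    "\<forall>l<p. e l = (\<Sum>k<n. r l k * y k)"
    using ex_closed_solution[OF assms(1) _ _ assms(7) m(2) r(2)] by blast
  let ?h = "linear_extension Z n b y"
  show ?thesis
  proof (rule retraction_hom_imp_subset[OF assms(8,2,9)])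
    show "?h ` E \<subseteq> K"
      using linear_extension_in[OF sp _ assms(2,4)] y(1) by blast
    show "\<forall>t\<in>K. ?h t = t"
      using linear_extension_fixes[OF assms(10,3,6) _ r(1,2) y(3)] by blast
    show "\<forall>a\<in>E. \<forall>a'\<in>E. ?h (a - a') = ?h a - ?h a'"
      using linear_extension_diff[OF assms(10,3)] by blast
    show "\<forall>a\<in>E. \<forall>a'\<in>E. ?h (a * a') = ?h a * ?h a'"
      using linear_extension_mult[OF assms(10,3,5) _ _ m(1,2) y(2)] by blast
  qed
qed

theorem theorem2:
  fixes K :: "'a::division_ring set"
  assumes "subdivring K"
    and "left_findim (center_of K) K"
    and "ex_closed K"
    and "center_of K \<subseteq> center_of (UNIV :: 'a set)"
  shows "regular_ext K"
  unfolding regular_ext_def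
proof (intro allI impI)
  fix x assume "algebraic_over K x"
  define Z where "Z = center_of K"
  define E where "E = gen_subfield K x"
  have Z: "subdivring Z" "Z \<subseteq> K"
    using subdivring_center_of[OF assms(1)] by (auto simp: Z_def center_of_def)
  have E: "subdivring E" "K \<subseteq> E" "x \<in> E"
    unfolding E_def by (rule subdivring_gen_subfield gen_subfield_superset gen_subfield_generator)+
  obtain D where D: "finite D" "D \<subseteq> K" "spans Z D (\<lambda>d. d) K"
    using assms(2) unfolding Z_def left_findim_iff_spans by blast
  obtain e where e: "spans Z {..<card D} e K" "\<forall>l<card D. e l \<in> K"
    using spans_reindex_nat[OF D(1,3)] D(2) by auto
  \<comment> \<open>only the left half of \<open>algebraic_over\<close> is needed\<close>
  obtain C where C: "finite C" "C \<subseteq> E" "spans K C (\<lambda>c. c) E"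
    using \<open>algebraic_over K x\<close> unfolding algebraic_over_def left_findim_iff_spans E_def by blast
  have "(\<lambda>(d, c). d * c) ` (D \<times> C) \<subseteq> E"
    using D(2) C(2) E(1,2) subdivring_mult by fastforce
  then obtain n b where "basis_of Z n b E"
    using finite_spans_imp_basis[OF Z(1) _ spans_products[OF D(3) C(3)]] D(1) C(1) by blast
  then have "E \<subseteq> K"
    using ex_closed_finite_extension_subset[OF assms(3,1) Z _ e] E(1,2) assms(4)
    unfolding Z_def by blast
  then show "x \<in> K"
    using E(3) by blast
qed

end
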